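(* Let $\Gamma$ be a presheaf on $\mathbb{T}$, let $X$ be a family over $\Gamma$, let $\varphi$ be a predicate over $(\Gamma.X)\times\mathrm{Clk}$, and let $n:\Gamma\to\mathbb{N}$ be a morphism of presheaves into the constant presheaf $\mathbb{N}$. Suppose that for all $(\mathcal{E},\vartheta)$, $\gamma\in\Gamma(\mathcal{E},\vartheta)$, $x,y\in X(\mathcal{E},\vartheta,\gamma)$ and $\lambda\in\mathcal{E}$, if $\star\in\varphi(\mathcal{E},\vartheta,\gamma,x,\lambda)$ and $\star\in\varphi(\mathcal{E},\vartheta,\gamma,y,\lambda)$ then $x=y$ or $\vartheta(\lambda)<n(\gamma)$ (this is the interpretation in the model of "$\varphi(x,\kappa)\wedge\varphi(y,\kappa)$ implies $(\triangleright^\kappa)^{n}(x=y)$"). Then for every $(\mathcal{E},\vartheta)$ and $\gamma\in\Gamma(\mathcal{E},\vartheta)$ the following are equivalent: (A) there exists $x\in X(\mathcal{E},\vartheta,\gamma)$ such that for all $\alpha<\rho$, $\star\in\varphi(\mathcal{E}\cup\{\lambda_\mathcal{E}\},\vartheta[\lambda_\mathcal{E}\mapsto\alpha],\iota\cdot\gamma,\iota\cdot x,\lambda_\mathcal{E})$; (B) for all $\alpha<\rho$ there exists $x\in X(\mathcal{E}\cup\{\lambda_\mathcal{E}\},\vartheta[\lambda_\mathcal{E}\mapsto\alpha],\iota\cdot\gamma)$ such that $\star\in\varphi(\mathcal{E}\cup\{\lambda_\mathcal{E}\},\vartheta[\lambda_\mathcal{E}\mapsto\alpha],\iota\cdot\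gamma,x,\lambda_\mathcal{E})$.
   Context: Fix a limit ordinal $\rho$ and a countably infinite set of clock names. The category $\mathbb{T}$ has objects pairs $(\mathcal{E},\vartheta)$ with $\mathcal{E}$ a finite set of clock names and $\vartheta:\mathcal{E}\to\rho$; a morphism $(\mathcal{E},\vartheta)\to(\mathcal{E}',\vartheta')$ is a function $\sigma:\mathcal{E}\to\mathcal{E}'$ with $\vartheta'\circ\sigma\le\vartheta$ pointwise. A presheaf on $\mathbb{T}$ is a covariant functor $\mathbb{T}\to\mathsf{Set}$; write $\sigma\cdot x$ for the action of $\sigma$. $\mathrm{Clk}$ is the presheaf $\mathrm{Clk}(\mathcal{E},\vartheta)=\mathcal{E}$ with $\sigma\cdot\lambda=\sigma(\lambda)$. For a presheaf $\Gamma$, $\int\Gamma$ is its category of elements, with objects $(\mathcal{E},\vartheta,\gamma)$; a presheaf $X$ over $\int\Gamma$ is a covariant functor $\int\Gamma\to\mathsf{Set}$ with fibres $X(\mathcal{E},\vartheta,\gamma)$ and maps $\sigma\cdot(-)$. $X$ is invariant under clock introduction if for all $(\mathcal{E},\vartheta)$, $\gamma$, clock names $\lambda\notin\mathcal{E}$ and $\alpha<\rho$, the map $\iota\cdot(-): X(\mathcal{E},\vartheta,\gamma)\to X(\mathcal{E}\cup\{\lambda\},\vartheta[\lambda\mapsto\alpha],\iota\cdot\gamma)$ induced by the inclusion $\iota:\mathcal{E}\to\mathcal{E}\cup\{\lambda\}$ is a bijection. A family over $\Gamma$ is a presheaf over $\int\Gamma$ invariant under clock introduction; a predicate is a family all of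 whose fibres are subsets of $\{\star\}$. The comprehension $\Gamma.X$ is the presheaf $(\Gamma.X)(\mathcal{E},\vartheta)=\{(\gamma,x)\mid\gamma\in\Gamma(\mathcal{E},\vartheta), x\in X(\mathcal{E},\vartheta,\gamma)\}$; thus a predicate $\varphi$ over $(\Gamma.X)\times\mathrm{Clk}$ has fibres $\varphi(\mathcal{E},\vartheta,\gamma,x,\lambda)\subseteq\{\star\}$ for $\lambda\in\mathcal{E}$. A function assigning to each finite set $\mathcal{E}$ of clock names a clock name $\lambda_\mathcal{E}\notin\mathcal{E}$ is fixed, and $\iota$ denotes the inclusion $\mathcal{E}\to\mathcal{E}\cup\{\lambda_\mathcal{E}\}$, viewed as a morphism $(\mathcal{E},\vartheta)\to(\mathcal{E}\cup\{\lambda_\mathcal{E}\},\vartheta[\lambda_\mathcal{E}\mapsto\alpha])$. *)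

theory Defs
  imports Main "HOL-Library.Countable"
begin

text \<open>Ordinals below the limit ordinal rho are modelled by a type 'o of class
  {wellorder, no_top} (a nonempty well-order without greatest element, i.e. a limit
  ordinal). Objects (E, theta) of the category T are finite partial maps
  theta :: 'c \<rightharpoonup> 'o with E = dom theta. Morphisms are functions
  sigma :: 'c \<Rightarrow> 'c, considered only on dom theta.\<close>

definition obj :: "('c \<rightharpoonup> 'o) \<Rightarrow> bool" where
  "obj \<theta> \<longleftrightarrow> finite (dom \<theta>)"

definition mor :: "('c \<rightharpoonup> 'o::order) \<Rightarrow> ('c \<rightharpoonup> 'o) \<Rightarrow> ('c \<Rightarrow> 'c) \<Rightarrow> bool" where
  "mor \<theta> \<theta>' \<sigma> \<longleftrightarrow> obj \<theta> \<and> obj \<theta>' \<and>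
     (\<forall>c\<in>dom \<theta>. \<sigma> c \<in> dom \<theta>' \<and> the (\<theta>' (\<sigma> c)) \<le> the (\<theta> c))"

definition presheaf ::
  "(('c \<rightharpoonup> 'o::order) \<Rightarrow> 'g set) \<Rightarrow> (('c \<rightharpoonup> 'o) \<Rightarrow> ('c \<rightharpoonup> 'o) \<Rightarrow> ('c \<Rightarrow> 'c) \<Rightarrow> 'g \<Rightarrow> 'g) \<Rightarrow> bool" where
  "presheaf G act \<longleftrightarrow>
     (\<forall>\<theta> \<theta>' \<sigma> g. mor \<theta> \<theta>' \<sigma> \<longrightarrow> g \<in> G \<theta> \<longrightarrow> act \<theta> \<theta>' \<sigma> g \<in> G \<theta>') \<and>
     (\<forall>\<theta> g. obj \<theta> \<longrightarrow> g \<in> G \<theta> \<longrightarrow> act \<theta> \<theta> id g = g) \<and>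
     (\<forall>\<theta> \<theta>' \<theta>'' \<sigma> \<tau> g. mor \<theta> \<theta>' \<sigma> \<longrightarrow> mor \<theta>' \<theta>'' \<tau> \<longrightarrow> g \<in> G \<theta> \<longrightarrow>
        act \<theta> \<theta>'' (\<tau> \<circ> \<sigma>) g = act \<theta>' \<theta>'' \<tau> (act \<theta> \<theta>' \<sigma> g)) \<and>
     (\<forall>\<theta> \<theta>' \<sigma> \<sigma>' g. mor \<theta> \<theta>' \<sigma> \<longrightarrow> (\<forall>c\<in>dom \<theta>. \<sigma> c = \<sigma>' c) \<longrightarrow> g \<in> G \<theta> \<longrightarrow>
        act \<theta> \<theta>' \<sigma> g = act \<theta> \<theta>' \<sigma>' g)"

text \<open>Covariant presheaf over the category of elements of (G, act):
  fibres X theta g, action xact theta theta' sigma g.\<close>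
definition presheaf_over ::
  "(('c \<rightharpoonup> 'o::order) \<Rightarrow> 'g set) \<Rightarrow> (('c \<rightharpoonup> 'o) \<Rightarrow> ('c \<rightharpoonup> 'o) \<Rightarrow> ('c \<Rightarrow> 'c) \<Rightarrow> 'g \<Rightarrow> 'g)
   \<Rightarrow> (('c \<rightharpoonup> 'o) \<Rightarrow> 'g \<Rightarrow> 'x set)
   \<Rightarrow> (('c \<rightharpoonup> 'o) \<Rightarrow> ('c \<rightharpoonup> 'o) \<Rightarrow> ('c \<Rightarrow> 'c) \<Rightarrow> 'g \<Rightarrow> 'x \<Rightarrow> 'x) \<Rightarrow> bool" where
  "presheaf_over G act X xact \<longleftrightarrow>
     (\<forall>\<theta> \<theta>' \<sigma> g x. mor \<theta> \<theta>' \<sigma> \<longrightarrow> g \<in> G \<theta> \<longrightarrow> x \<in> X \<theta> g \<longrightarrow>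
        xact \<theta> \<theta>' \<sigma> g x \<in> X \<theta>' (act \<theta> \<theta>' \<sigma> g)) \<and>
     (\<forall>\<theta> g x. obj \<theta> \<longrightarrow> g \<in> G \<theta> \<longrightarrow> x \<in> X \<theta> g \<longrightarrow> xact \<theta> \<theta> id g x = x) \<and>
     (\<forall>\<theta> \<theta>' \<theta>'' \<sigma> \<tau> g x. mor \<theta> \<theta>' \<sigma> \<longrightarrow> mor \<theta>' \<theta>'' \<tau> \<longrightarrow> g \<in> G \<theta> \<longrightarrow> x \<in> X \<theta> g \<longrightarrow>
        xact \<theta> \<theta>'' (\<tau> \<circ> \<sigma>) g x = xact \<theta>' \<theta>'' \<tau> (act \<theta> \<theta>' \<sigma> g) (xact \<theta> \<theta>' \<sigma> g x)) \<and>
     (\<forall>\<theta> \<theta>' \<sigma> \<sigma>' g x. mor \<theta> \<theta>' \<sigma> \<longrightarrow> (\<forall>c\<in>dom \<theta>. \<sigma> c = \<sigma>' c) \<longrightarrow> g \<in> G \<theta> \<longrightarrow> x \<in> X \<theta> g \<longrightarrow>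
        xact \<theta> \<theta>' \<sigma> g x = xact \<theta> \<theta>' \<sigma>' g x)"

text \<open>Invariance under clock introduction (the inclusion E \<rightarrow> E \<union> {l} is id).\<close>
definition clock_invariant ::
  "(('c \<rightharpoonup> 'o::order) \<Rightarrow> 'g set) \<Rightarrow> (('c \<rightharpoonup> 'o) \<Rightarrow> ('c \<rightharpoonup> 'o) \<Rightarrow> ('c \<Rightarrow> 'c) \<Rightarrow> 'g \<Rightarrow> 'g)
   \<Rightarrow> (('c \<rightharpoonup> 'o) \<Rightarrow> 'g \<Rightarrow> 'x set)
   \<Rightarrow> (('c \<rightharpoonup> 'o) \<Rightarrow> ('c \<rightharpoonup> 'o) \<Rightarrow> ('c \<Rightarrow> 'c) \<Rightarrow> 'g \<Rightarrow> 'x \<Rightarrow> 'x) \<Rightarrow> bool" where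
  "clock_invariant G act X xact \<longleftrightarrow>
     (\<forall>\<theta> g l \<alpha>. obj \<theta> \<longrightarrow> g \<in> G \<theta> \<longrightarrow> l \<notin> dom \<theta> \<longrightarrow>
        bij_betw (xact \<theta> (\<theta>(l \<mapsto> \<alpha>)) id g) (X \<theta> g) (X (\<theta>(l \<mapsto> \<alpha>)) (act \<theta> (\<theta>(l \<mapsto> \<alpha>)) id g)))"

definition family where
  "family G act X xact \<longleftrightarrow> presheaf_over G act X xact \<and> clock_invariant G act X xact"

text \<open>A predicate: a family all of whose fibres are subsets of the singleton {()}
  (the type unit); the action on such fibres is necessarily the unique map.\<close>
definition predicate ::
  "(('c \<rightharpoonup> 'o::order) \<Rightarrow> 'g set) \<Rightarrow> (('c \<rightharpoonup> 'o) \<Rightarrow> ('c \<rightharpoonup> 'o) \<Rightarrow> ('c \<Rightarrow> 'c) \<Rightarrow> 'g \<Rightarrow> 'g)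
   \<Rightarrow> (('c \<rightharpoonup> 'o) \<Rightarrow> 'g \<Rightarrow> unit set) \<Rightarrow> bool" where
  "predicate G act P \<longleftrightarrow> family G act P (\<lambda>_ _ _ _ _. ())"

definition compr :: "(('c \<rightharpoonup> 'o) \<Rightarrow> 'g set) \<Rightarrow> (('c \<rightharpoonup> 'o) \<Rightarrow> 'g \<Rightarrow> 'x set) \<Rightarrow> ('c \<rightharpoonup> 'o) \<Rightarrow> ('g \<times> 'x) set" where
  "compr G X \<theta> = {(g, x). g \<in> G \<theta> \<and> x \<in> X \<theta> g}"

definition compr_act where
  "compr_act act xact \<theta> \<theta>' \<sigma> gx = (act \<theta> \<theta>' \<sigma> (fst gx), xact \<theta> \<theta>' \<sigma> (fst gx) (snd gx))"

definition Clk :: "('c \<rightharpoonup> 'o) \<Rightarrow> 'c set" where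
  "Clk \<theta> = dom \<theta>"

definition Clk_act :: "('c \<rightharpoonup> 'o) \<Rightarrow> ('c \<rightharpoonup> 'o) \<Rightarrow> ('c \<Rightarrow> 'c) \<Rightarrow> 'c \<Rightarrow> 'c" where
  "Clk_act \<theta> \<theta>' \<sigma> l = \<sigma> l"

definition prod_psh where
  "prod_psh G1 G2 \<theta> = G1 \<theta> \<times> G2 \<theta>"

definition prod_act where
  "prod_act act1 act2 \<theta> \<theta>' \<sigma> p = (act1 \<theta> \<theta>' \<sigma> (fst p), act2 \<theta> \<theta>' \<sigma> (snd p))"

definition nat_morphism ::
  "(('c \<rightharpoonup> 'o::order) \<Rightarrow> 'g set) \<Rightarrow> (('c \<rightharpoonup> 'o) \<Rightarrow> ('c \<rightharpoonup> 'o) \<Rightarrow> ('c \<Rightarrow> 'c) \<Rightarrow> 'g \<Rightarrow> 'g)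
   \<Rightarrow> (('c \<rightharpoonup> 'o) \<Rightarrow> 'g \<Rightarrow> nat) \<Rightarrow> bool" where
  "nat_morphism G act n \<longleftrightarrow>
     (\<forall>\<theta> \<theta>' \<sigma> g. mor \<theta> \<theta>' \<sigma> \<longrightarrow> g \<in> G \<theta> \<longrightarrow> n \<theta>' (act \<theta> \<theta>' \<sigma> g) = n \<theta> g)"

text \<open>Ordinal comparison alpha < n for a natural number n (a finite ordinal):
  the initial segment below alpha is finite with fewer than n elements.\<close>
definition ord_less_nat :: "'o::wellorder \<Rightarrow> nat \<Rightarrow> bool" where
  "ord_less_nat \<alpha> n \<longleftrightarrow> finite {\<beta>. \<beta> < \<alpha>} \<and> card {\<beta>. \<beta> < \<alpha>} < n"

end

theory Submission
  imports Defs
begin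

text \<open>Pulling the witnesses of (B) back along the clock-introduction bijections yields
  elements \<open>y\<^sub>\<alpha>\<close> of \<open>X(\<E>, \<vartheta>, \<gamma>)\<close> satisfying \<open>\<phi>\<close> when the fresh clock has value \<open>\<alpha>\<close>.
  Lowering the value of a clock is a morphism, so each \<open>y\<^sub>\<alpha>\<close> also satisfies \<open>\<phi>\<close> at every
  \<open>\<beta> \<le> \<alpha>\<close>. As \<open>\<rho>\<close> is a limit ordinal it contains some \<open>\<beta> \<ge> n(\<gamma>)\<close>, where the uniqueness
  hypothesis forces \<open>y\<^sub>\<alpha> = y\<^sub>\<beta>\<close> for all \<open>\<alpha> \<ge> \<beta>\<close>; hence \<open>y\<^sub>\<beta>\<close> is a witness for (A).\<close>

lemma presheaf_act_closed:
  "presheaf G act \<Longrightarrow> mor \<theta> \<theta>' \<sigma> \<Longrightarrow> g \<in> G \<theta> \<Longrightarrow> act \<theta> \<theta>' \<sigma> g \<in> G \<theta>'"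
  unfolding presheaf_def by blast

lemma presheaf_act_comp:
  "presheaf G act \<Longrightarrow> mor \<theta> \<theta>' \<sigma> \<Longrightarrow> mor \<theta>' \<theta>'' \<tau> \<Longrightarrow> g \<in> G \<theta> \<Longrightarrow>
    act \<theta> \<theta>'' (\<tau> \<circ> \<sigma>) g = act \<theta>' \<theta>'' \<tau> (act \<theta> \<theta>' \<sigma> g)"
  unfolding presheaf_def by blast

lemma presheaf_over_act_comp:
  "presheaf_over G act X xact \<Longrightarrow> mor \<theta> \<theta>' \<sigma> \<Longrightarrow> mor \<theta>' \<theta>'' \<tau> \<Longrightarrow> g \<in> G \<theta> \<Longrightarrow> x \<in> X \<theta> g \<Longrightarrow>
    xact \<theta> \<theta>'' (\<tau> \<circ> \<sigma>) g x = xact \<theta>' \<theta>'' \<tau> (act \<theta> \<theta>' \<sigma> g) (xact \<theta> \<theta>' \<sigma> g x)"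
  unfolding presheaf_over_def by blast

lemma family_clock_intro_bij:
  "family G act X xact \<Longrightarrow> obj \<theta> \<Longrightarrow> g \<in> G \<theta> \<Longrightarrow> l \<notin> dom \<theta> \<Longrightarrow>
    bij_betw (xact \<theta> (\<theta>(l \<mapsto> \<alpha>)) id g) (X \<theta> g) (X (\<theta>(l \<mapsto> \<alpha>)) (act \<theta> (\<theta>(l \<mapsto> \<alpha>)) id g))"
  unfolding family_def clock_invariant_def by blast

lemma predicate_act_closed:
  "predicate G act P \<Longrightarrow> mor \<theta> \<theta>' \<sigma> \<Longrightarrow> g \<in> G \<theta> \<Longrightarrow> () \<in> P \<theta> g \<Longrightarrow> () \<in> P \<theta>' (act \<theta> \<theta>' \<sigma> g)"
  unfolding predicate_def family_def presheaf_over_def by (elim conjE) blast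

lemma nat_morphism_act:
  "nat_morphism G act n \<Longrightarrow> mor \<theta> \<theta>' \<sigma> \<Longrightarrow> g \<in> G \<theta> \<Longrightarrow> n \<theta>' (act \<theta> \<theta>' \<sigma> g) = n \<theta> g"
  unfolding nat_morphism_def by blast

lemma mor_clock_intro: "obj \<theta> \<Longrightarrow> l \<notin> dom \<theta> \<Longrightarrow> mor \<theta> (\<theta>(l \<mapsto> \<alpha>)) id"
  by (auto simp: mor_def obj_def)

lemma mor_clock_lower: "obj \<theta> \<Longrightarrow> \<beta> \<le> \<alpha> \<Longrightarrow> mor (\<theta>(l \<mapsto> \<alpha>)) (\<theta>(l \<mapsto> \<beta>)) id"
  by (auto simp: mor_def obj_def)

lemma ex_not_ord_less_nat: "\<exists>\<beta>::'o::{wellorder,no_top}. \<not> ord_less_nat \<beta> N"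
proof -
  obtain succ :: "'o \<Rightarrow> 'o" where succ: "\<And>x. x < succ x"
    using gt_ex by metis
  define chain where "chain k = (succ ^^ k) undefined" for k
  have "strict_mono chain"
    by (simp add: strict_mono_Suc_iff chain_def succ)
  then have "chain ` {..<N} \<subseteq> {\<beta>. \<beta> < chain N}" and "inj_on chain {..<N}"
    by (auto simp: strict_mono_less strict_mono_imp_inj_on)
  then have "\<not> ord_less_nat (chain N) N"
    unfolding ord_less_nat_def by (metis card_image card_lessThan card_mono not_le)
  then show ?thesis ..
qed

locale fresh_clock =
  fixes G :: "('c \<rightharpoonup> 'o::linorder) \<Rightarrow> 'g set"
    and act :: "('c \<rightharpoonup> 'o) \<Rightarrow> ('c \<rightharpoonup> 'o) \<Rightarrow> ('c \<Rightarrow> 'c) \<Rightarrow> 'g \<Rightarrow> 'g"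
    and X :: "('c \<rightharpoonup> 'o) \<Rightarrow> 'g \<Rightarrow> 'x set"
    and xact :: "('c \<rightharpoonup> 'o) \<Rightarrow> ('c \<rightharpoonup> 'o) \<Rightarrow> ('c \<Rightarrow> 'c) \<Rightarrow> 'g \<Rightarrow> 'x \<Rightarrow> 'x"
    and \<phi> :: "('c \<rightharpoonup> 'o) \<Rightarrow> (('g \<times> 'x) \<times> 'c) \<Rightarrow> unit set"
    and \<theta> :: "'c \<rightharpoonup> 'o"
    and \<gamma> :: 'g
    and l :: 'c
  assumes G: "presheaf G act"
    and X: "family G act X xact"
    and \<phi>: "predicate (prod_psh (compr G X) Clk) (prod_act (compr_act act xact) Clk_act) \<phi>"
    and obj: "obj \<theta>"
    and \<gamma>: "\<gamma> \<in> G \<theta>"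
    and fresh: "l \<notin> dom \<theta>"
begin

abbreviation \<theta>_ext :: "'o \<Rightarrow> 'c \<rightharpoonup> 'o" where
  "\<theta>_ext \<alpha> \<equiv> \<theta>(l \<mapsto> \<alpha>)"

abbreviation \<gamma>_ext :: "'o \<Rightarrow> 'g" where
  "\<gamma>_ext \<alpha> \<equiv> act \<theta> (\<theta>_ext \<alpha>) id \<gamma>"

abbreviation lift :: "'o \<Rightarrow> 'x \<Rightarrow> 'x" where
  "lift \<alpha> x \<equiv> xact \<theta> (\<theta>_ext \<alpha>) id \<gamma> x"

abbreviation holds :: "'o \<Rightarrow> 'x \<Rightarrow> bool" where
  "holds \<alpha> x \<equiv> () \<in> \<phi> (\<theta>_ext \<alpha>) ((\<gamma>_ext \<alpha>, lift \<alpha> x), l)"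

lemma obj_\<theta>_ext: "obj (\<theta>_ext \<alpha>)"
  using obj by (simp add: obj_def)

lemma mor_\<theta>_ext: "mor \<theta> (\<theta>_ext \<alpha>) id"
  using mor_clock_intro[OF obj fresh] .

lemma \<gamma>_ext_mem: "\<gamma>_ext \<alpha> \<in> G (\<theta>_ext \<alpha>)"
  using presheaf_act_closed[OF G, OF mor_\<theta>_ext \<gamma>] .

lemma lift_bij: "bij_betw (lift \<alpha>) (X \<theta> \<gamma>) (X (\<theta>_ext \<alpha>) (\<gamma>_ext \<alpha>))"
  using family_clock_intro_bij[OF X, OF obj \<gamma> fresh] .

lemma lift_mem: "x \<in> X \<theta> \<gamma> \<Longrightarrow> lift \<alpha> x \<in> X (\<theta>_ext \<alpha>) (\<gamma>_ext \<alpha>)"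
  using bij_betwE[OF lift_bij] by blast

lemma lift_inj: "x \<in> X \<theta> \<gamma> \<Longrightarrow> y \<in> X \<theta> \<gamma> \<Longrightarrow> lift \<alpha> x = lift \<alpha> y \<Longrightarrow> x = y"
  using bij_betw_imp_inj_on[OF lift_bij] by (auto dest: inj_onD)

lemma ex_lift_iff:
  "(\<exists>x \<in> X (\<theta>_ext \<alpha>) (\<gamma>_ext \<alpha>). () \<in> \<phi> (\<theta>_ext \<alpha>) ((\<gamma>_ext \<alpha>, x), l)) \<longleftrightarrow> (\<exists>x \<in> X \<theta> \<gamma>. holds \<alpha> x)"
  unfolding bij_betw_imp_surj_on[OF lift_bij, symmetric] by simp

lemma holds_antimono:
  assumes le: "\<beta> \<le> \<alpha>" and x: "x \<in> X \<theta> \<gamma>" and holds: "holds \<alpha> x"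
  shows "holds \<beta> x"
proof -
  have lower: "mor (\<theta>_ext \<alpha>) (\<theta>_ext \<beta>) id"
    using mor_clock_lower[OF obj le] .
  have XP: "presheaf_over G act X xact"
    using X by (simp add: family_def)
  have mem: "((\<gamma>_ext \<alpha>, lift \<alpha> x), l) \<in> prod_psh (compr G X) Clk (\<theta>_ext \<alpha>)"
    using \<gamma>_ext_mem lift_mem[OF x] by (simp add: prod_psh_def compr_def Clk_def)
  have \<gamma>_lower: "\<gamma>_ext \<beta> = act (\<theta>_ext \<alpha>) (\<theta>_ext \<beta>) id (\<gamma>_ext \<alpha>)"
    using presheaf_act_comp[OF G, OF mor_\<theta>_ext lower \<gamma>] by (simp only: id_comp)
  have x_lower: "lift \<beta> x = xact (\<theta>_ext \<alpha>) (\<theta>_ext \<beta>) id (\<gamma>_ext \<alpha>) (lift \<alpha> x)"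
    using presheaf_over_act_comp[OF XP, OF mor_\<theta>_ext lower \<gamma> x] by (simp only: id_comp)
  from predicate_act_closed[OF \<phi>, OF lower mem holds]
  show ?thesis
    unfolding \<gamma>_lower x_lower by (simp add: prod_act_def compr_act_def Clk_act_def)
qed

lemma glue_witnesses:
  assumes unique: "\<And>x y. x \<in> X \<theta> \<gamma> \<Longrightarrow> y \<in> X \<theta> \<gamma> \<Longrightarrow> holds \<beta> x \<Longrightarrow> holds \<beta> y \<Longrightarrow> x = y"
    and witness: "\<And>\<alpha>. \<exists>x \<in> X \<theta> \<gamma>. holds \<alpha> x"
  shows "\<exists>x \<in> X \<theta> \<gamma>. \<forall>\<alpha>. holds \<alpha> x"
proof -
  obtain y where y_mem: "\<And>\<alpha>. y \<alpha> \<in> X \<theta> \<gamma>" and y_holds: "\<And>\<alpha>. holds \<alpha> (y \<alpha>)"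
    using witness by metis
  have "holds \<alpha> (y \<beta>)" for \<alpha>
  proof -
    let ?\<alpha>' = "max \<alpha> \<beta>"
    have "holds \<beta> (y ?\<alpha>')"
      using holds_antimono[of \<beta> ?\<alpha>' "y ?\<alpha>'"] y_mem y_holds by simp
    then have "y ?\<alpha>' = y \<beta>"
      using unique[of "y ?\<alpha>'" "y \<beta>"] y_mem y_holds by blast
    moreover have "holds \<alpha> (y ?\<alpha>')"
      using holds_antimono[of \<alpha> ?\<alpha>' "y ?\<alpha>'"] y_mem y_holds by simp
    ultimately show ?thesis
      by simp
  qed
  with y_mem show ?thesis
    by blast
qed

end

theorem mainTheorem6:
  fixes G :: "('c::countable \<rightharpoonup> 'o::{wellorder,no_top}) \<Rightarrow> 'g set"
    and act :: "('c \<rightharpoonup> 'o) \<Rightarrow> ('c \<rightharpoonup> 'o) \<Rightarrow> ('c \<Rightarrow> 'c) \<Rightarrow> 'g \<Rightarrow> 'g"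
    and X :: "('c \<rightharpoonup> 'o) \<Rightarrow> 'g \<Rightarrow> 'x set"
    and xact :: "('c \<rightharpoonup> 'o) \<Rightarrow> ('c \<rightharpoonup> 'o) \<Rightarrow> ('c \<Rightarrow> 'c) \<Rightarrow> 'g \<Rightarrow> 'x \<Rightarrow> 'x"
    and \<phi> :: "('c \<rightharpoonup> 'o) \<Rightarrow> (('g \<times> 'x) \<times> 'c) \<Rightarrow> unit set"
    and n :: "('c \<rightharpoonup> 'o) \<Rightarrow> 'g \<Rightarrow> nat"
    and fresh :: "'c set \<Rightarrow> 'c"
    and \<theta> :: "'c \<rightharpoonup> 'o"
    and \<gamma> :: 'g
  assumes clocks_inf: "infinite (UNIV :: 'c set)"
    and fresh: "\<And>E. finite E \<Longrightarrow> fresh E \<notin> E"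
    and G: "presheaf G act"
    and X: "family G act X xact"
    and phi: "predicate (prod_psh (compr G X) Clk) (prod_act (compr_act act xact) Clk_act) \<phi>"
    and n: "nat_morphism G act n"
    and uniq: "\<And>\<theta> g x y l. obj \<theta> \<Longrightarrow> g \<in> G \<theta> \<Longrightarrow> x \<in> X \<theta> g \<Longrightarrow> y \<in> X \<theta> g \<Longrightarrow> l \<in> dom \<theta> \<Longrightarrow>
        () \<in> \<phi> \<theta> ((g, x), l) \<Longrightarrow> () \<in> \<phi> \<theta> ((g, y), l) \<Longrightarrow>
        x = y \<or> ord_less_nat (the (\<theta> l)) (n \<theta> g)"
    and obj: "obj \<theta>"
    and \<gamma>: "\<gamma> \<in> G \<theta>"
  shows "(\<exists>x \<in> X \<theta> \<gamma>. \<forall>\<alpha>.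
            () \<in> \<phi> (\<theta>(fresh (dom \<theta>) \<mapsto> \<alpha>))
                 ((act \<theta> (\<theta>(fresh (dom \<theta>) \<mapsto> \<alpha>)) id \<gamma>,
                   xact \<theta> (\<theta>(fresh (dom \<theta>) \<mapsto> \<alpha>)) id \<gamma> x), fresh (dom \<theta>)))
         \<longleftrightarrow>
         (\<forall>\<alpha>. \<exists>x \<in> X (\<theta>(fresh (dom \<theta>) \<mapsto> \<alpha>)) (act \<theta> (\<theta>(fresh (dom \<theta>) \<mapsto> \<alpha>)) id \<gamma>).
            () \<in> \<phi> (\<theta>(fresh (dom \<theta>) \<mapsto> \<alpha>))
                 ((act \<theta> (\<theta>(fresh (dom \<theta>) \<mapsto> \<alpha>)) id \<gamma>, x), fresh (dom \<theta>)))"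
proof -
  let ?l = "fresh (dom \<theta>)"
  have l: "?l \<notin> dom \<theta>"
    using fresh obj by (simp add: obj_def)
  interpret fresh_clock G act X xact \<phi> \<theta> \<gamma> ?l
    using G X phi obj \<gamma> l by unfold_locales
  obtain \<beta> :: 'o where \<beta>: "\<not> ord_less_nat \<beta> (n \<theta> \<gamma>)"
    using ex_not_ord_less_nat by blast
  have unique: "x = y" if x: "x \<in> X \<theta> \<gamma>" and y: "y \<in> X \<theta> \<gamma>" and "holds \<beta> x" "holds \<beta> y" for x y
  proof -
    from uniq[OF obj_\<theta>_ext \<gamma>_ext_mem lift_mem[OF x] lift_mem[OF y] _ that(3,4)]
    have "lift \<beta> x = lift \<beta> y \<or> ord_less_nat \<beta> (n (\<theta>_ext \<beta>) (\<gamma>_ext \<beta>))"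
      by simp
    then have "lift \<beta> x = lift \<beta> y"
      using \<beta> nat_morphism_act[OF n, OF mor_\<theta>_ext \<gamma>] by simp
    then show ?thesis
      by (rule lift_inj[OF x y])
  qed
  show ?thesis
  proof
    assume "\<exists>x \<in> X \<theta> \<gamma>. \<forall>\<alpha>. holds \<alpha> x"
    then show "\<forall>\<alpha>. \<exists>x \<in> X (\<theta>_ext \<alpha>) (\<gamma>_ext \<alpha>). () \<in> \<phi> (\<theta>_ext \<alpha>) ((\<gamma>_ext \<alpha>, x), ?l)"
      using lift_mem by blast
  next
    assume "\<forall>\<alpha>. \<exists>x \<in> X (\<theta>_ext \<alpha>) (\<gamma>_ext \<alpha>). () \<in> \<phi> (\<theta>_ext \<alpha>) ((\<gamma>_ext \<alpha>, x), ?l)"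
    then show "\<exists>x \<in> X \<theta> \<gamma>. \<forall>\<alpha>. holds \<alpha> x"
      using glue_witnesses[OF unique] ex_lift_iff by blast
  qed
qed

end
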